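(* Let $M$ be a small Seifert manifold with nonzero Euler number and let $\chi$ be an exceptional abelian character of $M$. Then the Zariski tangent space $T_\chi{\mathcal{X}}(M)$ of the character scheme at $\chi$ has dimension $1$ over $\mathbb{C}$.
   Context: A small Seifert manifold is $M=S^2(-\frac{q_1}{p_1},-\frac{q_2}{p_2},\frac{q_3}{p_3})$ (integers $p_i\ge2$, $\gcd(p_i,q_i)=1$), fibering over $S^2$ with three exceptional fibers, with $\pi_1(M)=\langle h,c_1,c_2\mid hc_1=c_1h,\ hc_2=c_2h,\ c_i^{p_i}=h^{q_i}\ (i=1,2,3)\rangle$, $c_3:=c_1c_2$; nonzero Euler number means $-\frac{q_1}{p_1}-\frac{q_2}{p_2}+\frac{q_3}{p_3}\neq0$. ${\mathcal{X}}(M)$ is the $\mathrm{SL}_2(\mathbb{C})$-character scheme $\mathrm{Hom}(\pi_1(M),\mathrm{SL}_2(\mathbb{C}))/\!/\mathrm{SL}_2(\mathbb{C})$ (scheme-theoretic), whose coordinate ring is the commutative $\mathbb{C}$-algebra generated by $t_x$, $x\in\pi_1(M)$, with relations $t_{xy}+t_{xy^{-1}}=t_xt_y$, $t_{xy}=t_{yx}$, $t_1=2$. A character $\chi$ is exceptional abelian if it is the character of a representation with abelian image and $\chi(h)=\pm2$, $\chi(c_i)\neq\pm2$ for $i=1,2,3$ (where $\chi(g)$ denotes the trace of $g$). *)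

theory Defs
  imports "HOL-Analysis.Analysis" "HOL-Library.Function_Algebras"
begin

text \<open>Generators of pi_1(M): h, c1, c2. A letter is a generator with a flag
  (True = inverse). Group elements are words modulo the congruence generated by
  free cancellation and the defining relators.\<close>

datatype gen = Gh | Gc1 | Gc2

type_synonym letter = "gen \<times> bool"
type_synonym word = "letter list"

definition flip :: "letter \<Rightarrow> letter" where
  "flip a = (fst a, \<not> snd a)"

definition winv :: "word \<Rightarrow> word" where
  "winv w = rev (map flip w)"

definition wpow :: "word \<Rightarrow> int \<Rightarrow> word" where
  "wpow w k = (if 0 \<le> k then concat (replicate (nat k) w)
               else concat (replicate (nat (- k)) (winv w)))"

definition wh :: word where "wh = [(Gh, False)]"
definition wc1 :: word where "wc1 = [(Gc1, False)]"
definition wc2 :: word where "wc2 = [(Gc2, False)]"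
definition wc3 :: word where "wc3 = wc1 @ wc2"

definition relators :: "int \<Rightarrow> int \<Rightarrow> int \<Rightarrow> int \<Rightarrow> int \<Rightarrow> int \<Rightarrow> word set" where
  "relators p1 q1 p2 q2 p3 q3 =
     { wh @ wc1 @ winv wh @ winv wc1,
       wh @ wc2 @ winv wh @ winv wc2,
       wpow wc1 p1 @ wpow wh (- q1),
       wpow wc2 p2 @ wpow wh (- q2),
       wpow wc3 p3 @ wpow wh (- q3) }"

inductive wequiv :: "word set \<Rightarrow> word \<Rightarrow> word \<Rightarrow> bool" for R where
  refl: "wequiv R u u"
| sym: "wequiv R u v \<Longrightarrow> wequiv R v u"
| trans: "wequiv R u v \<Longrightarrow> wequiv R v w \<Longrightarrow> wequiv R u w"
| cancel: "wequiv R (u @ [a, flip a] @ v) (u @ v)"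
| rel: "r \<in> R \<Longrightarrow> wequiv R (u @ r @ v) (u @ v)"

text \<open>Functions on pi_1 = functions on words constant on equivalence classes.\<close>
definition respects_pi1 :: "word set \<Rightarrow> (word \<Rightarrow> 'a) \<Rightarrow> bool" where
  "respects_pi1 R f \<longleftrightarrow> (\<forall>u v. wequiv R u v \<longrightarrow> f u = f v)"

type_synonym mat2 = "complex^2^2"

definition SL2 :: "mat2 set" where
  "SL2 = {A. det A = 1}"

fun weval :: "(gen \<Rightarrow> mat2) \<Rightarrow> word \<Rightarrow> mat2" where
  "weval rho [] = mat 1"
| "weval rho (a # w) = (if snd a then matrix_inv (rho (fst a)) else rho (fst a)) ** weval rho w"

definition is_rep :: "word set \<Rightarrow> (gen \<Rightarrow> mat2) \<Rightarrow> bool" where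
  "is_rep R rho \<longleftrightarrow> (\<forall>g. rho g \<in> SL2) \<and> (\<forall>r\<in>R. weval rho r = mat 1)"

definition abelian_image :: "(gen \<Rightarrow> mat2) \<Rightarrow> bool" where
  "abelian_image rho \<longleftrightarrow> (\<forall>u v. weval rho u ** weval rho v = weval rho v ** weval rho u)"

definition character :: "(gen \<Rightarrow> mat2) \<Rightarrow> word \<Rightarrow> complex" where
  "character rho w = trace (weval rho w)"

definition exceptional_abelian :: "word set \<Rightarrow> (word \<Rightarrow> complex) \<Rightarrow> bool" where
  "exceptional_abelian R chi \<longleftrightarrow>
     (\<exists>rho. is_rep R rho \<and> abelian_image rho \<and> chi = character rho) \<and>
     (chi wh = 2 \<or> chi wh = -2) \<and>
     (\<forall>c\<in>{wc1, wc2, wc3}. chi c \<noteq> 2 \<and> chi c \<noteq> -2)"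

text \<open>Zariski tangent space of the character scheme at a C-point chi:
  C-algebra maps from the coordinate ring (generated by t_x, x in pi_1, with
  relations t_xy + t_xy^-1 = t_x t_y, t_xy = t_yx, t_1 = 2) to the dual numbers
  C[eps] lifting chi, i.e. t_x |-> chi(x) + eps d(x). This is the space of the
  first-order parts d (equivalently, chi-derivations of the coordinate ring).\<close>
definition char_tangent :: "word set \<Rightarrow> (word \<Rightarrow> complex) \<Rightarrow> (word \<Rightarrow> complex) set" where
  "char_tangent R chi = {d. respects_pi1 R d \<and>
      (\<forall>x y. d (x @ y) + d (x @ winv y) = chi x * d y + d x * chi y) \<and>
      (\<forall>x y. d (x @ y) = d (y @ x)) \<and>
      d [] = 0}"

definition fscale :: "complex \<Rightarrow> (word \<Rightarrow> complex) \<Rightarrow> (word \<Rightarrow> complex)" where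
  "fscale c f = (\<lambda>x. c * f x)"

end

theory Submission
  imports Defs
begin

text \<open>
  An exceptional abelian character is the character \<open>w \<mapsto> \<lambda>(w) + \<lambda>(w)\<inverse>\<close> of a diagonal
  representation, where \<open>\<lambda> : \<pi>\<^sub>1(M) \<rightarrow> \<complex>\<^sup>\<times>\<close> has \<open>\<lambda>(h) = \<plusminus>1\<close> and \<open>\<lambda>(c\<^sub>i) \<noteq> \<plusminus>1\<close>.

  Upper bound. A tangent vector \<open>d\<close> satisfies \<open>d(ggv) = \<chi>(g) d(gv) + d(g) \<chi>(gv) - d(v)\<close>, so along
  the powers of \<open>g\<close> it obeys a linear recurrence with characteristic roots \<open>\<lambda>(g)\<^sup>\<plusminus>\<^sup>1\<close>. As
  \<open>\<lambda>(c\<^sub>1) ^ p\<^sub>1 = \<plusminus>1\<close>, the relation \<open>c\<^sub>1 ^ p\<^sub>1 = h ^ q\<^sub>1\<close> forces \<open>d(h) = 0\<close>. If moreover \<open>d(c\<^sub>3) = 0\<close>, the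
  relation for \<open>c\<^sub>3\<close> gives \<open>d(hv) = \<lambda>(h) d(v)\<close> for all \<open>v\<close>, the relations for \<open>c\<^sub>1, c\<^sub>2\<close> then give
  \<open>d(c\<^sub>1) = d(c\<^sub>2) = 0\<close>, and an induction on words shows \<open>d = 0\<close>: inverse letters, letters \<open>h\<close>
  (central) and squares (after a cyclic rotation) can always be split off. So \<open>d \<mapsto> d(c\<^sub>3)\<close> is
  injective on the tangent space.

  Lower bound. Deforming the diagonal representation over \<open>\<complex>[t]/(t\<^sup>3)\<close>, with \<open>t\<close>-terms off the
  diagonal and \<open>t\<^sup>2\<close>-terms on it, gives a representation whose character is \<open>\<chi> + t\<^sup>2 d\<close> with a
  tangent vector \<open>d \<noteq> 0\<close>.
\<close>

section \<open>Words\<close>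

lemma flip_flip [simp]: "flip (flip a) = a"
  by (simp add: flip_def)

lemma winv_Nil [simp]: "winv [] = []"
  by (simp add: winv_def)

lemma winv_Cons: "winv (a # w) = winv w @ [flip a]"
  by (simp add: winv_def)

lemma winv_append [simp]: "winv (x @ y) = winv y @ winv x"
  by (simp add: winv_def)

lemma winv_winv [simp]: "winv (winv w) = w"
  by (simp add: winv_def rev_map comp_def)

lemmas wequiv_trans [trans] = wequiv.trans

lemma wequiv_append_cong: "wequiv R u v \<Longrightarrow> wequiv R (x @ u @ y) (x @ v @ y)"
proof (induction rule: wequiv.induct)
  case (cancel u a v)
  show ?case
    using wequiv.cancel[of R "x @ u" a "v @ y"] by simp
next
  case (rel r u v)
  show ?case
    using wequiv.rel[OF rel, of "x @ u" "v @ y"] by simp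
qed (blast intro: wequiv.intros)+

lemma wequiv_winv_cancel: "wequiv R (winv w @ w @ u) u"
proof (induction w arbitrary: u)
  case Nil
  show ?case by (simp add: wequiv.refl)
next
  case (Cons a w)
  have "wequiv R (winv w @ [flip a, flip (flip a)] @ (w @ u)) (winv w @ w @ u)"
    by (rule wequiv.cancel)
  then show ?case
    using Cons by (simp add: winv_Cons) (blast intro: wequiv.trans)
qed

lemma wequiv_relator:
  assumes "u @ winv t \<in> R"
  shows "wequiv R u t"
proof -
  have "wequiv R ([] @ (u @ winv t) @ t) ([] @ [] @ t)"
    using wequiv.rel[OF assms, of "[]" "[]"] wequiv_append_cong by fastforce
  moreover have "wequiv R (u @ (winv t @ t @ []) @ []) (u @ [] @ [])"
    using wequiv_append_cong[OF wequiv_winv_cancel] .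
  ultimately show ?thesis
    by (auto intro: wequiv.trans wequiv.sym)
qed

definition wrep :: "word \<Rightarrow> nat \<Rightarrow> word" where
  "wrep w n = concat (replicate n w)"

lemma wrep_0 [simp]: "wrep w 0 = []"
  by (simp add: wrep_def)

lemma wrep_Suc_0 [simp]: "wrep w (Suc 0) = w"
  by (simp add: wrep_def)

lemma wrep_Suc: "wrep w (Suc n) = w @ wrep w n"
  by (simp add: wrep_def)

lemma wrep_Suc_right: "wrep w (Suc n) = wrep w n @ w"
  by (simp add: wrep_def replicate_append_same[symmetric] del: replicate_append_same)

lemma wrep_commute: "wrep w n @ w = w @ wrep w n"
  by (metis wrep_Suc wrep_Suc_right)

lemma winv_wrep: "winv (wrep w n) = wrep (winv w) n"
  by (induction n) (simp_all add: wrep_Suc wrep_commute)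

lemma wpow_nonneg: "0 \<le> k \<Longrightarrow> wpow w k = wrep w (nat k)"
  by (simp add: wpow_def wrep_def)

lemma wpow_neg: "k < 0 \<Longrightarrow> wpow w k = wrep (winv w) (nat (- k))"
  by (simp add: wpow_def wrep_def)

lemma wpow_uminus: "wpow w (- k) = winv (wpow w k)"
  by (cases "k = 0") (auto simp: wpow_def wrep_def[symmetric] winv_wrep)

section \<open>Diagonal characters\<close>

text \<open>\<open>diag_trace \<lambda>\<close> is the character of the representation \<open>g \<mapsto> diag(\<lambda> g, (\<lambda> g)\<inverse>)\<close>.\<close>

fun mchar :: "(gen \<Rightarrow> complex) \<Rightarrow> word \<Rightarrow> complex" where
  "mchar lam [] = 1"
| "mchar lam (a # w) = (if snd a then inverse (lam (fst a)) else lam (fst a)) * mchar lam w"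

lemma mchar_append [simp]: "mchar lam (x @ y) = mchar lam x * mchar lam y"
  by (induction x) auto

lemma mchar_winv [simp]: "mchar lam (winv w) = inverse (mchar lam w)"
  by (induction w) (auto simp: winv_Cons flip_def)

lemma mchar_wrep [simp]: "mchar lam (wrep w n) = mchar lam w ^ n"
  by (induction n) (auto simp: wrep_Suc)

lemma mchar_nonzero: "(\<And>g. lam g \<noteq> 0) \<Longrightarrow> mchar lam w \<noteq> 0"
  by (induction w) auto

definition diag_trace :: "(gen \<Rightarrow> complex) \<Rightarrow> word \<Rightarrow> complex" where
  "diag_trace lam w = mchar lam w + inverse (mchar lam w)"

lemma diag_trace_Nil [simp]: "diag_trace lam [] = 2"
  by (simp add: diag_trace_def)

section \<open>Tangent vectors at a diagonal character\<close>

locale diag_tangent =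
  fixes R :: "word set" and lam :: "gen \<Rightarrow> complex" and D :: "word \<Rightarrow> complex"
  assumes lam_nonzero: "\<And>g. lam g \<noteq> 0"
    and tangent: "D \<in> char_tangent R (diag_trace lam)"
begin

abbreviation "m \<equiv> mchar lam"
abbreviation "chi \<equiv> diag_trace lam"

lemma D_wequiv: "wequiv R u v \<Longrightarrow> D u = D v"
  using tangent by (simp add: char_tangent_def respects_pi1_def)

lemma D_append_winv: "D (x @ y) + D (x @ winv y) = chi x * D y + D x * chi y"
  using tangent by (simp add: char_tangent_def)

lemma D_cyclic: "D (x @ y) = D (y @ x)"
  using tangent by (simp add: char_tangent_def)

lemma D_Nil [simp]: "D [] = 0"
  using tangent by (simp add: char_tangent_def)

lemma m_nonzero: "m w \<noteq> 0"
  using mchar_nonzero lam_nonzero by blast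

lemma D_winv: "D (winv y) = D y"
  using D_append_winv[of "[]" y] by simp

lemma D_rotate: "D (rotate n w) = D w"
  by (metis D_cyclic append_take_drop_id rotate_drop_take)

lemma D_square: "D (g @ g @ v) = chi g * D (g @ v) + D g * chi (g @ v) - D v"
proof -
  have "D (g @ winv (g @ v)) = D (winv g @ g @ winv v)"
    using D_cyclic[of "g @ winv v" "winv g"] by simp
  also have "\<dots> = D v"
    using D_wequiv[OF wequiv_winv_cancel] D_winv by simp
  finally show ?thesis
    using D_append_winv[of g "g @ v"] by (simp add: algebra_simps)
qed

lemma D_wrep_step:
  "D (wrep g (Suc (Suc n)) @ v) =
     chi g * D (wrep g (Suc n) @ v) + D g * chi (wrep g (Suc n) @ v) - D (wrep g n @ v)"
  using D_square[of g "wrep g n @ v"] by (simp add: wrep_Suc)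

text \<open>The following four formulas solve the recurrence \<open>D_wrep_step\<close>, whose characteristic roots
  are \<open>m g\<close> and \<open>(m g)\<inverse>\<close>; they differ in whether these roots coincide and whether \<open>D g\<close> vanishes.\<close>

lemma D_wrep:
  "(m g - inverse (m g)) * D (wrep g n) = of_nat n * (m g ^ n - inverse (m g) ^ n) * D g"
proof (induction n rule: induct_nat_012)
  case (ge2 n)
  define x y X Y where "x = m g" and "y = inverse (m g)" and "X = x ^ n" and "Y = y ^ n"
  have xy: "x * y = 1"
    using m_nonzero by (simp add: x_def y_def)
  have step: "D (wrep g (Suc (Suc n))) =
      (x + y) * D (wrep g (Suc n)) + D g * (x * X + y * Y) - D (wrep g n)"
    using D_wrep_step[of g n "[]"] by (simp add: diag_trace_def x_def y_def X_def Y_def power_inverse)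
  have "(x - y) * D (wrep g (Suc (Suc n))) =
      (x + y) * ((x - y) * D (wrep g (Suc n))) + (x - y) * D g * (x * X + y * Y)
      - (x - y) * D (wrep g n)"
    unfolding step by (simp add: algebra_simps)
  also have "\<dots> = (x + y) * (of_nat (Suc n) * (x * X - y * Y) * D g)
      + (x - y) * D g * (x * X + y * Y) - of_nat n * (X - Y) * D g"
    using ge2 by (simp add: x_def y_def X_def Y_def)
  also have "\<dots> = of_nat (Suc (Suc n)) * (x * (x * X) - y * (y * Y)) * D g"
    using xy by (simp add: algebra_simps) algebra
  finally show ?case
    by (simp add: x_def y_def X_def Y_def)
qed simp_all

lemma D_wrep_involutive:
  assumes "m g * m g = 1"
  shows "D (wrep g n) = m g ^ Suc n * of_nat n ^ 2 * D g"
proof (induction n rule: induct_nat_012)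
  case 1
  show ?case using assms by simp
next
  case (ge2 n)
  define s X where "s = m g" and "X = m g ^ n"
  have ss: "s * s = 1" and inv: "inverse s = s"
    using assms by (simp_all add: s_def inverse_unique)
  have "D (wrep g (Suc (Suc n))) = 2 * s * D (wrep g (Suc n)) + D g * (2 * s * X) - D (wrep g n)"
    using D_wrep_step[of g n "[]"]
    by (simp add: diag_trace_def s_def[symmetric] X_def inv power_inverse[symmetric])
  also have "\<dots> = 2 * s * (s * s * X * (of_nat n + 1) ^ 2 * D g) + D g * (2 * s * X)
      - s * X * of_nat n ^ 2 * D g"
    using ge2 by (simp add: s_def X_def algebra_simps)
  also have "\<dots> = s * (s * s) * X * (of_nat n + 2) ^ 2 * D g"
    using ss by (simp add: algebra_simps power2_eq_square)
  finally show ?case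
    by (simp add: s_def X_def algebra_simps)
qed simp

lemma D_wrep_append:
  assumes "D g = 0"
  shows "(m g - inverse (m g)) * D (wrep g n @ v) =
    (m g ^ n - inverse (m g) ^ n) * D (g @ v) - (m g ^ n * inverse (m g) - inverse (m g) ^ n * m g) * D v"
proof (induction n rule: induct_nat_012)
  case 0
  show ?case using m_nonzero[of g] by (simp add: algebra_simps)
next
  case (ge2 n)
  define x y X Y where "x = m g" and "y = inverse (m g)" and "X = x ^ n" and "Y = y ^ n"
  have xy: "x * y = 1"
    using m_nonzero by (simp add: x_def y_def)
  have step: "D (wrep g (Suc (Suc n)) @ v) = (x + y) * D (wrep g (Suc n) @ v) - D (wrep g n @ v)"
    using D_wrep_step[of g n v] assms by (simp add: diag_trace_def x_def y_def)
  have "(x - y) * D (wrep g (Suc (Suc n)) @ v) =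
      (x + y) * ((x - y) * D (wrep g (Suc n) @ v)) - (x - y) * D (wrep g n @ v)"
    unfolding step by (simp add: algebra_simps)
  also have "\<dots> = (x + y) * ((x * X - y * Y) * D (g @ v) - (x * X * y - y * Y * x) * D v)
      - ((X - Y) * D (g @ v) - (X * y - Y * x) * D v)"
    using ge2 by (simp add: x_def y_def X_def Y_def)
  also have "\<dots> = (x * (x * X) - y * (y * Y)) * D (g @ v) - (x * (x * X) * y - y * (y * Y) * x) * D v"
    using xy by (simp add: algebra_simps) algebra
  finally show ?case
    by (simp add: x_def y_def X_def Y_def)
qed (simp add: wrep_Suc)

lemma D_wrep_append_involutive:
  assumes "D g = 0" and "m g * m g = 1"
  shows "D (wrep g n @ v) = m g ^ n * (D v + of_nat n * (m g * D (g @ v) - D v))"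
proof (induction n rule: induct_nat_012)
  case 1
  show ?case using assms(2) by (simp add: algebra_simps)
next
  case (ge2 n)
  define s X where "s = m g" and "X = m g ^ n"
  have ss: "s * s = 1" and inv: "inverse s = s"
    using assms(2) by (simp_all add: s_def inverse_unique)
  have "D (wrep g (Suc (Suc n)) @ v) = 2 * s * D (wrep g (Suc n) @ v) - D (wrep g n @ v)"
    using D_wrep_step[of g n v] assms(1) by (simp add: diag_trace_def s_def[symmetric] inv)
  also have "\<dots> = 2 * s * (s * X * (D v + (of_nat n + 1) * (s * D (g @ v) - D v)))
      - X * (D v + of_nat n * (s * D (g @ v) - D v))"
    using ge2 by (simp add: s_def X_def)
  also have "\<dots> = s * (s * X) * (D v + (of_nat n + 2) * (s * D (g @ v) - D v))"
    using ss by (simp add: algebra_simps) algebra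
  finally show ?case
    by (simp add: s_def X_def algebra_simps)
qed simp

lemma D_wrep_torsion:
  assumes "m g ^ n = \<sigma>" "\<sigma> * \<sigma> = 1" "m g * m g \<noteq> 1"
  shows "D (wrep g n) = 0"
    and "D (wrep g (Suc n)) = of_nat (Suc n) * \<sigma> * D g"
    and "D g = 0 \<Longrightarrow> D (wrep g n @ v) = \<sigma> * D v"
proof -
  have nz: "m g - inverse (m g) \<noteq> 0"
    using assms(3) m_nonzero[of g] by (auto simp: field_simps)
  have inv: "inverse (m g) ^ n = \<sigma>"
    using assms(1,2) by (simp add: power_inverse inverse_unique)
  have "(m g - inverse (m g)) * D (wrep g n) = 0"
    using D_wrep[of g n] assms(1) inv by simp
  then show "D (wrep g n) = 0"
    using nz by simp
  have "(m g - inverse (m g)) * D (wrep g (Suc n)) = (m g - inverse (m g)) * (of_nat (Suc n) * \<sigma> * D g)"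
    using D_wrep[of g "Suc n"] assms(1) inv by (simp add: algebra_simps)
  then show "D (wrep g (Suc n)) = of_nat (Suc n) * \<sigma> * D g"
    using nz by simp
  assume "D g = 0"
  then have "(m g - inverse (m g)) * D (wrep g n @ v) = (m g - inverse (m g)) * (\<sigma> * D v)"
    using D_wrep_append[of g n v] assms(1) inv by (simp add: algebra_simps)
  then show "D (wrep g n @ v) = \<sigma> * D v"
    using nz by simp
qed

lemma D_wpow_involutive:
  assumes "m g * m g = 1"
  shows "D (wpow g q) = m g ^ Suc (nat \<bar>q\<bar>) * of_nat (nat \<bar>q\<bar>) ^ 2 * D g"
proof (cases "q \<ge> 0")
  case True
  then show ?thesis
    using D_wrep_involutive[OF assms, of "nat q"] by (simp add: wpow_nonneg)
next
  case False
  have "m (winv g) = m g"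
    using assms by (simp add: inverse_unique)
  then show ?thesis
    using False assms D_wrep_involutive[of "winv g" "nat (- q)"] by (simp add: wpow_neg D_winv)
qed

lemma D_wpow_append_involutive:
  assumes "D g = 0" and "m g * m g = 1"
  shows "D (wpow g q @ v) = m g ^ nat \<bar>q\<bar> * (D v + of_int q * (m g * D (g @ v) - D v))"
proof (cases "q \<ge> 0")
  case True
  then show ?thesis
    using D_wrep_append_involutive[OF assms, of "nat q" v] by (simp add: wpow_nonneg)
next
  case False
  define s where "s = m g"
  have ss: "s * s = 1" and inv: "inverse s = s"
    using assms(2) by (simp_all add: s_def inverse_unique)
  have "D (v @ g) + D (v @ winv g) = D v * (s + inverse s)"
    using D_append_winv[of v g] assms(1) by (simp add: diag_trace_def s_def)
  then have winv_g: "D (winv g @ v) = 2 * s * D v - D (g @ v)"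
    using D_cyclic[of v g] D_cyclic[of v "winv g"] inv by (simp add: algebra_simps)
  have "m (winv g) = s"
    using inv by (simp add: s_def)
  then have "D (wpow g q @ v) = s ^ nat (- q) * (D v + of_nat (nat (- q)) * (s * D (winv g @ v) - D v))"
    using False assms(1) ss D_wrep_append_involutive[of "winv g" "nat (- q)" v]
    by (simp add: wpow_neg D_winv)
  also have "\<dots> = s ^ nat \<bar>q\<bar> * (D v + of_int q * (s * D (g @ v) - D v))"
    using False assms(2) by (simp add: winv_g s_def algebra_simps of_nat_nat)
  finally show ?thesis
    by (simp add: s_def)
qed

lemma D_inverse_letter:
  assumes "D [(g, False)] = 0" and "D (v @ u) = 0"
  shows "D (u @ [(g, True)] @ v) = - D (u @ [(g, False)] @ v)"
proof -
  have "D ((v @ u) @ [(g, False)]) + D ((v @ u) @ [(g, True)]) = 0"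
    using D_append_winv[of "v @ u" "[(g, False)]"] assms by (simp add: winv_def flip_def)
  then show ?thesis
    using D_cyclic[of "u @ [(g, True)]" v] D_cyclic[of "u @ [(g, False)]" v]
    by (simp add: algebra_simps eq_neg_iff_add_eq_0)
qed

end

section \<open>Tangent vectors at an exceptional diagonal character\<close>

lemma rotate_square_prefix:
  assumes "set w \<subseteq> {x, y}" "2 \<le> length w" "w \<noteq> [x, y]" "w \<noteq> [y, x]"
  obtains g n v where "g \<noteq> []" "rotate n w = g @ g @ v"
proof -
  obtain a b r where w: "w = a # b # r"
    using assms(2) by (metis Suc_le_length_iff numeral_2_eq_2)
  have ab: "a \<in> {x, y}" "b \<in> {x, y}"
    using assms(1) w by auto
  show thesis
  proof (cases r)
    case Nil
    then have "a = b"
      using ab assms(3,4) w by auto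
    then show thesis
      using that[of "[a]" 0 "[]"] w Nil by simp
  next
    case (Cons c r')
    have c: "c \<in> {x, y}"
      using assms(1) w Cons by auto
    have "a = b \<or> b = c \<or> a = c"
      using ab c by blast
    then consider "a = b" | "b = c" | "a = c" "r' = []" | t r'' where "a = c" "a \<noteq> b" "r' = t # r''"
      by (cases r') blast+
    then show thesis
    proof cases
      case 1
      then show thesis using that[of "[a]" 0 "c # r'"] w Cons by simp
    next
      case 2
      then show thesis using that[of "[b]" 1 "r' @ [a]"] w Cons by simp
    next
      case 3
      then show thesis using that[of "[a]" 2 "[b]"] w Cons by (simp add: numeral_2_eq_2)
    next
      case 4
      then have "t = a \<or> t = b"
        using assms(1) ab w Cons by auto
      then show thesis
        using that[of "[a]" 2 "r'' @ [a, b]"] that[of "[a, b]" 0 r''] w Cons 4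
        by (auto simp: numeral_2_eq_2)
    qed
  qed
qed

lemma wequiv_commutator_relator:
  assumes "x @ y @ winv x @ winv y \<in> R"
  shows "wequiv R (y @ x) (x @ y)"
proof (rule wequiv.sym, rule wequiv_relator)
  show "(x @ y) @ winv (y @ x) \<in> R"
    using assms by simp
qed

lemma positive_word_commutes_h:
  assumes "\<forall>l\<in>set u. \<not> snd l"
  shows "wequiv (relators p1 q1 p2 q2 p3 q3) (u @ wh) (wh @ u)"
  using assms
proof (induction u)
  case Nil
  show ?case by (simp add: wequiv.refl)
next
  case (Cons l u)
  let ?R = "relators p1 q1 p2 q2 p3 q3"
  obtain g where l: "l = (g, False)"
    using Cons.prems by (cases l) auto
  have letter: "wequiv ?R ([l] @ wh) (wh @ [l])"
  proof (cases g)
    case Gh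
    then show ?thesis by (simp add: l wh_def wequiv.refl)
  next
    case Gc1
    then show ?thesis
      using wequiv_commutator_relator[of wh wc1 ?R] by (simp add: l relators_def wc1_def)
  next
    case Gc2
    then show ?thesis
      using wequiv_commutator_relator[of wh wc2 ?R] by (simp add: l relators_def wc2_def)
  qed
  have "wequiv ?R ([l] @ u @ wh) ([l] @ wh @ u)"
    using wequiv_append_cong[OF Cons.IH, of "[l]" "[]"] Cons.prems by simp
  also have "wequiv ?R ([l] @ wh @ u) (wh @ [l] @ u)"
    using wequiv_append_cong[OF letter, of "[]" u] by simp
  finally show ?case by simp
qed

lemma positive_letters:
  assumes "\<forall>l\<in>set w. \<not> snd l" "(Gh, False) \<notin> set w"
  shows "set w \<subseteq> {(Gc1, False), (Gc2, False)}"
proof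
  fix l
  assume l: "l \<in> set w"
  then obtain g where "l = (g, False)"
    using assms(1) by (metis prod.collapse)
  with l assms(2) show "l \<in> {(Gc1, False), (Gc2, False)}"
    by (cases g) auto
qed

locale exceptional_diag =
  fixes p1 q1 p2 q2 p3 q3 :: int and lam :: "gen \<Rightarrow> complex"
  assumes p_ge_2: "p1 \<ge> 2" "p2 \<ge> 2" "p3 \<ge> 2"
    and q_nonzero: "q1 \<noteq> 0" "q2 \<noteq> 0" "q3 \<noteq> 0"
    and lam_nonzero: "\<And>g. lam g \<noteq> 0"
    and mchar_relator: "\<And>r. r \<in> relators p1 q1 p2 q2 p3 q3 \<Longrightarrow> mchar lam r = 1"
    and lam_h_involutive: "lam Gh * lam Gh = 1"
    and mchar_not_involutive: "\<And>c. c \<in> {wc1, wc2, wc3} \<Longrightarrow> mchar lam c * mchar lam c \<noteq> 1"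
begin

abbreviation "rels \<equiv> relators p1 q1 p2 q2 p3 q3"

abbreviation "fibers \<equiv> {(wc1, p1, q1), (wc2, p2, q2), (wc3, p3, q3)}"

lemma fiber_c1: "(wc1, p1, q1) \<in> fibers"
  and fiber_c2: "(wc2, p2, q2) \<in> fibers"
  and fiber_c3: "(wc3, p3, q3) \<in> fibers"
  by simp_all

lemma fiber_invariants: "(c, p, q) \<in> fibers \<Longrightarrow> 2 \<le> p \<and> q \<noteq> 0 \<and> c \<in> {wc1, wc2, wc3}"
  using p_ge_2 q_nonzero by auto

lemma fiber_relator:
  assumes "(c, p, q) \<in> fibers"
  shows "wrep c (nat p) @ winv (wpow wh q) \<in> rels"
  using assms p_ge_2 by (auto simp: relators_def wpow_uminus[symmetric] wpow_nonneg)

lemma fiber_wequiv: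
  assumes "(c, p, q) \<in> fibers"
  shows "wequiv rels (wrep c (nat p) @ v) (wpow wh q @ v)"
  using wequiv_append_cong[OF wequiv_relator[OF fiber_relator[OF assms]], of "[]" v] by simp

lemma lam_h_pow_involutive: "lam Gh ^ k * lam Gh ^ k = 1"
  by (metis lam_h_involutive power_mult_distrib power_one)

lemma mchar_wpow_h: "mchar lam (wpow wh q) = lam Gh ^ nat \<bar>q\<bar>"
proof -
  have "inverse (lam Gh) = lam Gh"
    using lam_h_involutive by (simp add: inverse_unique)
  then show ?thesis
    by (cases "q \<ge> 0") (auto simp: wpow_nonneg wpow_neg wh_def winv_def flip_def)
qed

lemma mchar_fiber:
  assumes "(c, p, q) \<in> fibers"
  shows "mchar lam c ^ nat p = lam Gh ^ nat \<bar>q\<bar>"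
  using mchar_relator[OF fiber_relator[OF assms]] lam_h_pow_involutive
  by (simp add: mchar_wpow_h field_simps inverse_unique)

end

locale exceptional_diag_tangent = exceptional_diag +
  fixes D :: "word \<Rightarrow> complex"
  assumes D_tangent: "D \<in> char_tangent (relators p1 q1 p2 q2 p3 q3) (diag_trace lam)"

sublocale exceptional_diag_tangent \<subseteq> diag_tangent "relators p1 q1 p2 q2 p3 q3" lam D
  using lam_nonzero D_tangent by unfold_locales

context exceptional_diag_tangent
begin

lemma m_wh: "m wh = lam Gh"
  by (simp add: wh_def)

lemma D_fiber_relation:
  assumes "(c, p, q) \<in> fibers"
  shows "D (wrep c (nat p) @ v) = D (wpow wh q @ v)"
  using D_wequiv[OF fiber_wequiv[OF assms]] .

lemma D_fiber_torsion:
  assumes "(c, p, q) \<in> fibers"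
  shows "D (wrep c (nat p)) = 0"
    and "D (wrep c (Suc (nat p))) = of_nat (Suc (nat p)) * lam Gh ^ nat \<bar>q\<bar> * D c"
    and "D c = 0 \<Longrightarrow> D (wrep c (nat p) @ v) = lam Gh ^ nat \<bar>q\<bar> * D v"
  using D_wrep_torsion[OF mchar_fiber[OF assms] lam_h_pow_involutive] assms
    mchar_not_involutive fiber_invariants
  by auto

lemma D_h: "D wh = 0"
proof -
  have "D (wpow wh q1) = 0"
    using D_fiber_relation[OF fiber_c1, of "[]"] D_fiber_torsion(1)[OF fiber_c1] by simp
  then have "lam Gh ^ Suc (nat \<bar>q1\<bar>) * of_nat (nat \<bar>q1\<bar>) ^ 2 * D wh = 0"
    using D_wpow_involutive[of wh q1] lam_h_involutive by (simp add: m_wh)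
  then show ?thesis
    using lam_nonzero[of Gh] q_nonzero by simp
qed

lemma D_wpow_h_append:
  "D (wpow wh q @ v) = lam Gh ^ nat \<bar>q\<bar> * (D v + of_int q * (lam Gh * D (wh @ v) - D v))"
  using D_wpow_append_involutive[OF D_h] lam_h_involutive by (simp add: m_wh)

context
  assumes D_c3: "D wc3 = 0"
begin

lemma D_h_append: "D (wh @ v) = lam Gh * D v"
proof -
  have "lam Gh ^ nat \<bar>q3\<bar> * D v = lam Gh ^ nat \<bar>q3\<bar> * (D v + of_int q3 * (lam Gh * D (wh @ v) - D v))"
    using D_fiber_torsion(3)[OF fiber_c3, of v] D_fiber_relation[OF fiber_c3, of v] D_c3
    by (simp add: D_wpow_h_append)
  then have "lam Gh * D (wh @ v) = D v"
    using lam_nonzero[of Gh] q_nonzero by simp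
  then have "lam Gh * (lam Gh * D (wh @ v)) = lam Gh * D v"
    by simp
  then show ?thesis
    using lam_h_involutive by (simp add: mult.assoc[symmetric])
qed

lemma D_fiber:
  assumes "(c, p, q) \<in> fibers"
  shows "D c = 0"
proof -
  have "D (wrep c (Suc (nat p))) = D (wpow wh q @ c)"
    using D_fiber_relation[OF assms, of c] by (simp add: wrep_Suc_right)
  also have "\<dots> = lam Gh ^ nat \<bar>q\<bar> * D c"
    using lam_h_involutive by (simp add: D_wpow_h_append D_h_append mult.assoc[symmetric])
  finally have "lam Gh ^ nat \<bar>q\<bar> * (of_nat (nat p) * D c) = 0"
    using D_fiber_torsion(2)[OF assms] by (simp add: algebra_simps)
  then show ?thesis
    using lam_nonzero[of Gh] fiber_invariants[OF assms] by simp
qed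

lemma D_h_to_front:
  assumes "\<forall>l\<in>set u. \<not> snd l"
  shows "D (u @ wh @ v) = D (wh @ u @ v)"
  using D_wequiv[OF wequiv_append_cong[OF positive_word_commutes_h[OF assms], where x="[]" and y=v]] by simp

lemma D_letter: "\<not> snd l \<Longrightarrow> D [l] = 0"
  using D_h D_fiber[OF fiber_c1] D_fiber[OF fiber_c2]
  by (cases l; cases "fst l") (auto simp: wh_def wc1_def wc2_def)

lemma D_positive_with_h:
  assumes "\<forall>l\<in>set w. \<not> snd l" "(Gh, False) \<in> set w"
    and shorter: "\<And>u. length u < length w \<Longrightarrow> D u = 0"
  shows "D w = 0"
proof -
  obtain u v where "w = u @ (Gh, False) # v"
    using assms(2) by (meson split_list)
  then have w: "w = u @ wh @ v"
    by (simp add: wh_def)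
  have "D (u @ v) = 0"
    using shorter w by (simp add: wh_def)
  then show ?thesis
    using D_h_to_front[of u v] assms(1) w by (simp add: D_h_append)
qed

lemma D_c1_c2_word:
  assumes letters: "set w \<subseteq> {(Gc1, False), (Gc2, False)}"
    and shorter: "\<And>u. length u < length w \<Longrightarrow> D u = 0"
  shows "D w = 0"
proof (cases "length w < 2 \<or> w = wc1 @ wc2 \<or> w = wc2 @ wc1")
  case True
  then consider "w = []" | l where "w = [l]" | "w = wc3" | "w = wc2 @ wc1"
    by (auto simp: less_2_cases_iff length_Suc_conv wc3_def)
  then show ?thesis
    using D_letter[of "(Gc1, False)"] D_letter[of "(Gc2, False)"] D_c3 D_cyclic[of wc2 wc1] letters
    by cases (auto simp: wc3_def)
next
  case False
  then obtain g n v where g: "g \<noteq> []" and rot: "rotate n w = g @ g @ v"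
    using rotate_square_prefix[OF letters] by (auto simp: wc1_def wc2_def)
  have "length w = length g + length g + length v"
    using arg_cong[OF rot, of length] by simp
  then have "D g = 0" "D (g @ v) = 0" "D v = 0"
    using shorter g by simp_all
  then show ?thesis
    using D_square[of g v] D_rotate[of n w] rot by simp
qed

lemma D_eq_0: "D w = 0"
proof (induction w rule: wf_induct[OF wf_measures[of "[length, \<lambda>w. length (filter snd w)]"]])
  case (1 w)
  have shorter: "D u = 0" if "length u < length w" for u
    using 1 that by simp
  show "D w = 0"
  proof (cases "\<exists>l\<in>set w. snd l")
    case True
    then obtain l u v where l: "snd l" and "w = u @ l # v"
      by (meson split_list)
    then have w: "w = u @ [(fst l, True)] @ v"
      by (simp add: prod_eq_iff)
    have "D (u @ [(fst l, False)] @ v) = 0"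
      using 1 w by simp
    then show ?thesis
      using D_inverse_letter[OF D_letter shorter] w by simp
  next
    case False
    then have positive: "\<forall>l\<in>set w. \<not> snd l"
      by blast
    show ?thesis
    proof (cases "(Gh, False) \<in> set w")
      case True
      show ?thesis
        by (rule D_positive_with_h[OF positive True shorter])
    next
      case False
      show ?thesis
        by (rule D_c1_c2_word[OF positive_letters[OF positive False] shorter])
    qed
  qed
qed

end

end

lemma (in exceptional_diag) char_tangent_eq_0:
  assumes "D \<in> char_tangent rels (diag_trace lam)" "D wc3 = 0"
  shows "D = 0"
proof -
  interpret exceptional_diag_tangent p1 q1 p2 q2 p3 q3 lam D
    using assms(1) by unfold_locales
  show ?thesis
    using D_eq_0[OF assms(2)] by (simp add: fun_eq_iff)
qed

section \<open>\<open>2 \<times> 2\<close> matrices\<close>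

definition mk2 :: "'a::zero \<Rightarrow> 'a \<Rightarrow> 'a \<Rightarrow> 'a \<Rightarrow> 'a^2^2" where
  "mk2 a b c d = vector [vector [a, b], vector [c, d]]"

lemma mk2_nth [simp]:
  "mk2 a b c d $ 1 $ 1 = a" "mk2 a b c d $ 1 $ 2 = b" "mk2 a b c d $ 2 $ 1 = c" "mk2 a b c d $ 2 $ 2 = d"
  by (simp_all add: mk2_def)

lemma mk2_cases:
  obtains a b c d where "X = mk2 a b c d"
proof
  show "X = mk2 (X$1$1) (X$1$2) (X$2$1) (X$2$2)"
    by (simp add: vec_eq_iff forall_2)
qed

lemma mk2_eq_iff [simp]: "mk2 a b c d = mk2 a' b' c' d' \<longleftrightarrow> a = a' \<and> b = b' \<and> c = c' \<and> d = d'"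
  by (metis mk2_nth)

lemma mk2_mult [simp]:
  "(mk2 a b c d :: 'a::semiring_1^2^2) ** mk2 a' b' c' d' =
     mk2 (a * a' + b * c') (a * b' + b * d') (c * a' + d * c') (c * b' + d * d')"
  by (simp add: vec_eq_iff forall_2 matrix_matrix_mult_def sum_2)

lemma mat_1_eq_mk2: "(mat 1 :: 'a::semiring_1^2^2) = mk2 1 0 0 1"
  by (simp add: vec_eq_iff forall_2 mat_def)

lemma trace_mk2 [simp]: "trace (mk2 a b c d :: 'a::semiring_1^2^2) = a + d"
  by (simp add: trace_def sum_2)

lemma det_mk2 [simp]: "det (mk2 a b c d :: 'a::comm_ring_1^2^2) = a * d - b * c"
  by (simp add: det_2)

definition adj2 :: "'a::comm_ring_1^2^2 \<Rightarrow> 'a^2^2" where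
  "adj2 X = mk2 (X$2$2) (- X$1$2) (- X$2$1) (X$1$1)"

lemma adj2_mk2 [simp]: "adj2 (mk2 a b c d) = mk2 d (- b) (- c) a"
  by (simp add: adj2_def)

lemma adj2_adj2 [simp]: "adj2 (adj2 X) = X"
  by (cases X rule: mk2_cases) simp

lemma adj2_mult: "adj2 (X ** Y) = adj2 Y ** adj2 X"
  by (cases X rule: mk2_cases, cases Y rule: mk2_cases) (simp add: algebra_simps)

lemma trace_mult_adj2: "trace (X ** adj2 Y) = trace X * trace Y - trace (X ** Y)"
  by (cases X rule: mk2_cases, cases Y rule: mk2_cases) (simp add: algebra_simps)

lemma mult_adj2_det_1:
  assumes "det X = 1"
  shows "X ** adj2 X = mat 1" and "adj2 X ** X = mat 1"
  using assms by (cases X rule: mk2_cases; simp add: mat_1_eq_mk2 algebra_simps)+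

lemma det_conj:
  fixes X Q Q' :: "'a::comm_ring_1^'n^'n"
  assumes "Q ** Q' = mat 1"
  shows "det (Q ** X ** Q') = det X"
proof -
  have "det (Q ** X ** Q') = (det Q * det Q') * det X"
    by (simp add: det_mul ac_simps)
  also have "det Q * det Q' = 1"
    using det_mul[of Q Q'] assms by simp
  finally show ?thesis
    by simp
qed

lemma trace_conj:
  fixes X Q Q' :: "'a::comm_semiring_1^'n^'n"
  assumes "Q' ** Q = mat 1"
  shows "trace (Q ** X ** Q') = trace X"
  using trace_mul_sym[of "Q ** X" Q'] assms by (simp add: matrix_mul_assoc)

lemma conj_mult:
  fixes X Z P P' :: "'a::semiring_1^'n^'n"
  assumes "P ** P' = mat 1"
  shows "P' ** (X ** Z) ** P = (P' ** X ** P) ** (P' ** Z ** P)"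
proof -
  have "(P' ** X ** P) ** (P' ** Z ** P) = P' ** X ** (P ** P') ** Z ** P"
    by (simp add: matrix_mul_assoc)
  then show ?thesis
    using assms by (simp add: matrix_mul_assoc)
qed

section \<open>The ring \<open>\<complex>[t]/(t\<^sup>3)\<close>\<close>

text \<open>\<open>TP a b c\<close> stands for \<open>a + b t + c t\<^sup>2\<close>.\<close>

datatype tp = TP (tp0: complex) (tp1: complex) (tp2: complex)

instantiation tp :: comm_ring_1
begin

definition "0 = TP 0 0 0"
definition "1 = TP 1 0 0"
definition "x + y = TP (tp0 x + tp0 y) (tp1 x + tp1 y) (tp2 x + tp2 y)"
definition "x - y = TP (tp0 x - tp0 y) (tp1 x - tp1 y) (tp2 x - tp2 y)"
definition "- x = TP (- tp0 x) (- tp1 x) (- tp2 x)"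
definition "x * y = TP (tp0 x * tp0 y) (tp0 x * tp1 y + tp1 x * tp0 y)
   (tp0 x * tp2 y + tp1 x * tp1 y + tp2 x * tp0 y)"

instance
  by intro_classes
    (auto simp: zero_tp_def one_tp_def plus_tp_def minus_tp_def uminus_tp_def times_tp_def
      algebra_simps intro: tp.expand)

end

lemma tp_zero: "0 = TP 0 0 0" and tp_one: "1 = TP 1 0 0"
  by (simp_all add: zero_tp_def one_tp_def)

lemma TP_arith [simp]:
  "TP a b c + TP a' b' c' = TP (a + a') (b + b') (c + c')"
  "TP a b c - TP a' b' c' = TP (a - a') (b - b') (c - c')"
  "- TP a b c = TP (- a) (- b) (- c)"
  "TP a b c * TP a' b' c' = TP (a * a') (a * b' + b * a') (a * c' + b * b' + c * a')"
  by (simp_all add: plus_tp_def minus_tp_def uminus_tp_def times_tp_def)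

lemma tp_components [simp]:
  "tp0 (x + y) = tp0 x + tp0 y" "tp1 (x + y) = tp1 x + tp1 y" "tp2 (x + y) = tp2 x + tp2 y"
  "tp0 (x - y) = tp0 x - tp0 y" "tp1 (x - y) = tp1 x - tp1 y" "tp2 (x - y) = tp2 x - tp2 y"
  "tp0 (x * y) = tp0 x * tp0 y"
  by (simp_all add: plus_tp_def times_tp_def minus_tp_def)

lemma mat_1_tp: "(mat 1 :: tp^2^2) = mk2 (TP 1 0 0) (TP 0 0 0) (TP 0 0 0) (TP 1 0 0)"
  unfolding mat_1_eq_mk2 by (simp add: tp_zero tp_one)

lemma tp1_mult: "tp1 (x * y) = tp0 x * tp1 y + tp1 x * tp0 y"
  and tp2_mult: "tp2 (x * y) = tp0 x * tp2 y + tp1 x * tp1 y + tp2 x * tp0 y"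
  by (simp_all add: times_tp_def)

text \<open>Inverse letters are sent to adjugates, which are inverses as long as all generators have
  determinant 1.\<close>

fun teval :: "(gen \<Rightarrow> tp^2^2) \<Rightarrow> word \<Rightarrow> tp^2^2" where
  "teval G [] = mat 1"
| "teval G (l # w) = (if snd l then adj2 (G (fst l)) else G (fst l)) ** teval G w"

fun mpow :: "'a::semiring_1^2^2 \<Rightarrow> nat \<Rightarrow> 'a^2^2" where
  "mpow X 0 = mat 1"
| "mpow X (Suc n) = X ** mpow X n"

lemma teval_append: "teval G (x @ y) = teval G x ** teval G y"
  by (induction x) (auto simp: matrix_mul_assoc)

lemma teval_winv: "teval G (winv w) = adj2 (teval G w)"
proof (induction w)
  case (Cons l w)
  have "teval G [flip l] = adj2 (teval G [l])"
    by (simp add: flip_def mat_1_eq_mk2[symmetric] adj2_mult)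
  then show ?case
    using Cons teval_append[of G "[l]" w] by (simp add: winv_Cons teval_append adj2_mult)
qed (simp add: mat_1_eq_mk2)

lemma teval_wrep: "teval G (wrep w n) = mpow (teval G w) n"
  by (induction n) (auto simp: wrep_Suc teval_append)

lemma teval_wequiv:
  assumes det: "\<And>g. det (G g) = 1" and relators: "\<And>r. r \<in> R \<Longrightarrow> teval G r = mat 1"
  shows "wequiv R u v \<Longrightarrow> teval G u = teval G v"
proof (induction rule: wequiv.induct)
  case (cancel u a v)
  have "teval G [a, flip a] = mat 1"
    using mult_adj2_det_1[OF det[of "fst a"]] by (cases a) (auto simp: flip_def)
  then show ?case
    unfolding teval_append[of G u] teval_append[of G "[a, flip a]" v] by simp
next
  case (rel r u v)
  then show ?case
    by (simp add: teval_append relators matrix_mul_assoc[symmetric])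
qed simp_all

lemma mpow_conj:
  assumes "Q' ** Q = mat 1" "Q ** Q' = mat 1"
  shows "mpow (Q ** X ** Q') n = Q ** mpow X n ** Q'"
proof (induction n)
  case (Suc n)
  have "Q ** X ** Q' ** (Q ** mpow X n ** Q') = Q ** X ** (Q' ** Q) ** mpow X n ** Q'"
    by (simp add: matrix_mul_assoc)
  then show ?case
    using Suc assms by (simp add: matrix_mul_assoc)
qed (use assms in \<open>simp add: matrix_mul_assoc\<close>)

definition diag_mod_t :: "complex \<Rightarrow> tp^2^2 \<Rightarrow> bool" where
  "diag_mod_t l X \<longleftrightarrow> tp0 (X$1$1) = l \<and> tp0 (X$2$2) = inverse l \<and> tp1 (X$1$1) = 0 \<and> tp1 (X$2$2) = 0
     \<and> tp0 (X$1$2) = 0 \<and> tp0 (X$2$1) = 0"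

lemma diag_mod_t_mult: "diag_mod_t l X \<Longrightarrow> diag_mod_t l' Y \<Longrightarrow> diag_mod_t (l * l') (X ** Y)"
  by (cases X rule: mk2_cases, cases Y rule: mk2_cases) (simp add: diag_mod_t_def tp1_mult)

lemma diag_mod_t_adj2: "diag_mod_t l X \<Longrightarrow> diag_mod_t (inverse l) (adj2 X)"
  by (cases X rule: mk2_cases) (simp add: diag_mod_t_def minus_tp_def[of 0, symmetric] uminus_tp_def)

lemma diag_mod_t_teval:
  assumes "\<And>g. diag_mod_t (lam g) (G g)"
  shows "diag_mod_t (mchar lam w) (teval G w)"
proof (induction w)
  case Nil
  show ?case by (simp add: diag_mod_t_def mat_1_tp)
next
  case (Cons l w)
  then show ?case
    using assms diag_mod_t_adj2 diag_mod_t_mult by auto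
qed

lemma diag_mod_t_trace: "diag_mod_t l X \<Longrightarrow> tp0 (trace X) = l + inverse l \<and> tp1 (trace X) = 0"
  by (cases X rule: mk2_cases) (simp add: diag_mod_t_def)

definition tdiag :: "complex \<Rightarrow> complex \<Rightarrow> tp^2^2" where
  "tdiag \<mu> k = mk2 (TP \<mu> 0 (\<mu> * k)) 0 0 (TP (inverse \<mu>) 0 (- (inverse \<mu> * k)))"

definition unip :: "complex \<Rightarrow> complex \<Rightarrow> tp^2^2" where
  "unip x y = mk2 (TP 1 0 0) (TP 0 x 0) (TP 0 y 0) (TP 1 0 0)"

definition unip_inv :: "complex \<Rightarrow> complex \<Rightarrow> tp^2^2" where
  "unip_inv x y = mk2 (TP 1 0 (x * y)) (TP 0 (- x) 0) (TP 0 (- y) 0) (TP 1 0 (x * y))"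

lemma unip_inv_unip: "unip_inv x y ** unip x y = mat 1" "unip x y ** unip_inv x y = mat 1"
  by (simp_all add: unip_def unip_inv_def mat_1_tp)

lemma mpow_tdiag: "mpow (tdiag \<mu> k) n = tdiag (\<mu> ^ n) (of_nat n * k)"
  by (induction n) (auto simp: tdiag_def mat_1_tp tp_zero algebra_simps power_inverse)

lemma adj2_tdiag: "adj2 (tdiag \<mu> k) = tdiag (inverse \<mu>) (- k)"
  by (simp add: tdiag_def tp_zero)

lemma det_tdiag: "\<mu> \<noteq> 0 \<Longrightarrow> det (tdiag \<mu> k) = 1"
  by (simp add: tdiag_def tp_zero tp_one)

text \<open>For \<open>\<mu> = \<plusminus>1\<close>, \<open>tdiag \<mu> k\<close> is a scalar matrix plus \<open>t\<^sup>2\<close> times a diagonal one; as \<open>t\<^sup>3 = 0\<close>,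
  it commutes with every matrix whose off-diagonal entries are \<open>O(t)\<close>.\<close>

lemma conj_tdiag_involutive:
  assumes "\<mu> * \<mu> = 1"
  shows "unip x y ** tdiag \<mu> k ** unip_inv x y = tdiag \<mu> k"
proof -
  have "inverse \<mu> = \<mu>"
    using assms by (simp add: inverse_unique)
  then show ?thesis
    using assms by (simp add: unip_def unip_inv_def tdiag_def tp_zero algebra_simps)
qed

lemma tdiag_involutive_commute:
  assumes "\<mu> * \<mu> = 1" "tp0 (X$1$2) = 0" "tp0 (X$2$1) = 0"
  shows "tdiag \<mu> k ** X = X ** tdiag \<mu> k"
proof -
  have "inverse \<mu> = \<mu>"
    using assms by (simp add: inverse_unique)
  moreover obtain a b c d where X: "X = mk2 a b c d"
    by (rule mk2_cases)
  moreover obtain b1 b2 c1 c2 where "b = TP 0 b1 b2" "c = TP 0 c1 c2"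
    using assms(2,3) X by (metis mk2_nth tp.collapse)
  ultimately show ?thesis
    by (simp add: tdiag_def algebra_simps)
qed

lemma diag_mod_t_tdiag: "diag_mod_t \<mu> (tdiag \<mu> k)"
  and diag_mod_t_unip: "diag_mod_t 1 (unip x y)"
  and diag_mod_t_unip_inv: "diag_mod_t 1 (unip_inv x y)"
  by (simp_all add: diag_mod_t_def tdiag_def unip_def unip_inv_def tp_zero)

section \<open>A deformation over \<open>\<complex>[t]/(t\<^sup>3)\<close>\<close>

context exceptional_diag
begin

abbreviation "\<alpha> \<equiv> lam Gc1"
abbreviation "\<beta> \<equiv> lam Gc2"

definition "k1 = (of_int q1 / of_int p1 :: complex)"
definition "k2 = (of_int q2 / of_int p2 :: complex)"
definition "k3 = (of_int q3 / of_int p3 :: complex)"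

text \<open>\<open>\<nu>\<close> is chosen so that the \<open>t\<^sup>2\<close>-part of the trace of \<open>deform Gc1 ** deform Gc2\<close> is that of
  \<open>tdiag (\<alpha> \<beta>) k3\<close>; the conjugator \<open>unip x12 x21\<close> then comes from the \<open>t\<close>-parts.\<close>

definition "\<nu> = (k3 - k1 - k2) * (\<alpha> * \<beta> - inverse (\<alpha> * \<beta>)) / ((inverse \<alpha> - \<alpha>) * (\<beta> - inverse \<beta>))"
definition "x12 = - ((inverse \<alpha> - \<alpha>) * inverse \<beta>) / (\<alpha> * \<beta> - inverse (\<alpha> * \<beta>))"
definition "x21 = \<nu> * (\<beta> - inverse \<beta>) * inverse \<alpha> / (\<alpha> * \<beta> - inverse (\<alpha> * \<beta>))"

definition deform :: "gen \<Rightarrow> tp^2^2" where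
  "deform g = (case g of
      Gh \<Rightarrow> tdiag (lam Gh) 1
    | Gc1 \<Rightarrow> unip 1 0 ** tdiag \<alpha> k1 ** unip_inv 1 0
    | Gc2 \<Rightarrow> unip 0 \<nu> ** tdiag \<beta> k2 ** unip_inv 0 \<nu>)"

lemma eigenvalues_not_involutive:
  "\<alpha> * \<alpha> \<noteq> 1" "\<beta> * \<beta> \<noteq> 1" "(\<alpha> * \<beta>) * (\<alpha> * \<beta>) \<noteq> 1"
  using mchar_not_involutive[of wc1] mchar_not_involutive[of wc2] mchar_not_involutive[of wc3]
  by (simp_all add: wc1_def wc2_def wc3_def)

lemma deform_c1_c2: "deform Gc1 ** deform Gc2 = unip x12 x21 ** tdiag (\<alpha> * \<beta>) k3 ** unip_inv x12 x21"
proof -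
  define a b \<mu> ia ib i\<mu> where "a = \<alpha>" and "b = \<beta>" and "\<mu> = \<alpha> * \<beta>"
    and "ia = inverse \<alpha>" and "ib = inverse \<beta>" and "i\<mu> = inverse (\<alpha> * \<beta>)"
  have nz: "ia - a \<noteq> 0" "b - ib \<noteq> 0" "\<mu> - i\<mu> \<noteq> 0"
    using eigenvalues_not_involutive lam_nonzero[of Gc1] lam_nonzero[of Gc2]
    by (auto simp: a_def b_def \<mu>_def ia_def ib_def i\<mu>_def field_simps)
  have \<mu>: "\<mu> = a * b" and i\<mu>: "ia * ib = i\<mu>"
    by (simp_all add: a_def b_def \<mu>_def ia_def ib_def i\<mu>_def)
  define N12 N21 where "N12 = (ia - a) * ib" and "N21 = \<nu> * (b - ib) * ia"
  have \<nu>: "(ia - a) * \<nu> * (b - ib) = (k3 - k1 - k2) * (\<mu> - i\<mu>)"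
    using nz by (simp add: \<nu>_def a_def b_def \<mu>_def ia_def ib_def i\<mu>_def)
  have x12: "x12 * (\<mu> - i\<mu>) = - N12" and x21: "x21 * (\<mu> - i\<mu>) = N21"
    using nz by (simp_all add: x12_def x21_def N12_def N21_def a_def b_def \<mu>_def ia_def ib_def i\<mu>_def)
  have "N12 * N21 = (k3 - k1 - k2) * (\<mu> - i\<mu>) * i\<mu>"
    using \<nu> i\<mu> unfolding N12_def N21_def by algebra
  then have "(x12 * x21 * (\<mu> - i\<mu>)) * (\<mu> - i\<mu>) = (- (k3 - k1 - k2) * i\<mu>) * (\<mu> - i\<mu>)"
    using x12 x21 by algebra
  then have x12x21: "x12 * x21 * (\<mu> - i\<mu>) = - (k3 - k1 - k2) * i\<mu>"
    using nz by simp
  have e11: "a * (b * k2) + a * k1 * b + (ia - a) * (\<nu> * (b - ib)) = \<mu> * (x12 * x21) + \<mu> * k3 - x12 * i\<mu> * x21"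
    using x12x21 \<nu> \<mu> by algebra
  have e22: "- (ia * (k2 * ib)) - k1 * ia * ib = i\<mu> * (x12 * x21) - k3 * i\<mu> - x21 * \<mu> * x12"
    using x12x21 i\<mu> by algebra
  have e12: "(ia - a) * ib = x12 * i\<mu> - \<mu> * x12"
    using x12 unfolding N12_def by algebra
  have e21: "ia * (\<nu> * (b - ib)) = x21 * \<mu> - i\<mu> * x21"
    using x21 unfolding N21_def by algebra
  show ?thesis
    using e11 e22 e12 e21 i\<mu> \<mu>
    by (simp add: deform_def unip_def unip_inv_def tdiag_def a_def b_def \<mu>_def ia_def ib_def i\<mu>_def
        algebra_simps)
qed

lemma det_deform: "det (deform g) = 1"
  using lam_nonzero
  by (cases g) (simp_all add: deform_def det_conj unip_inv_unip det_tdiag)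

lemma diag_mod_t_deform: "diag_mod_t (lam g) (deform g)"
  using diag_mod_t_mult[OF diag_mod_t_mult[OF diag_mod_t_unip diag_mod_t_tdiag] diag_mod_t_unip_inv]
  by (cases g) (simp_all add: deform_def diag_mod_t_tdiag)

lemma teval_fiber:
  assumes "(c, p, q) \<in> fibers"
  obtains x y where "teval deform c = unip x y ** tdiag (mchar lam c) (of_int q / of_int p) ** unip_inv x y"
proof -
  have "teval deform wc1 = unip 1 0 ** tdiag (mchar lam wc1) (of_int q1 / of_int p1) ** unip_inv 1 0"
    and "teval deform wc2 = unip 0 \<nu> ** tdiag (mchar lam wc2) (of_int q2 / of_int p2) ** unip_inv 0 \<nu>"
    by (simp_all add: wc1_def wc2_def deform_def k1_def k2_def)
  moreover have "teval deform wc3 =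
      unip x12 x21 ** tdiag (mchar lam wc3) (of_int q3 / of_int p3) ** unip_inv x12 x21"
    by (simp add: wc3_def wc1_def wc2_def deform_c1_c2 k3_def)
  ultimately show thesis
    using assms that by auto
qed

lemma teval_wpow_h: "teval deform (wpow wh q) = tdiag (lam Gh ^ nat \<bar>q\<bar>) (of_int q)"
proof -
  have inv: "inverse (lam Gh) = lam Gh"
    using lam_h_involutive by (simp add: inverse_unique)
  show ?thesis
  proof (cases "q \<ge> 0")
    case True
    then show ?thesis
      by (simp add: wpow_nonneg teval_wrep wh_def deform_def mpow_tdiag)
  next
    case False
    have "teval deform (winv wh) = tdiag (lam Gh) (- 1)"
      using teval_winv[of deform wh] inv by (simp add: wh_def deform_def adj2_tdiag)
    then show ?thesis
      using False by (simp add: wpow_neg teval_wrep mpow_tdiag)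
  qed
qed

lemma teval_fiber_relation:
  assumes "(c, p, q) \<in> fibers"
  shows "teval deform (wrep c (nat p)) = teval deform (wpow wh q)"
proof -
  obtain x y where c: "teval deform c = unip x y ** tdiag (mchar lam c) (of_int q / of_int p) ** unip_inv x y"
    using teval_fiber[OF assms] .
  have "of_nat (nat p) * (of_int q / of_int p) = (of_int q :: complex)"
    using fiber_invariants[OF assms] by simp
  then have "teval deform (wrep c (nat p)) = unip x y ** tdiag (lam Gh ^ nat \<bar>q\<bar>) (of_int q) ** unip_inv x y"
    by (simp add: teval_wrep c mpow_conj unip_inv_unip mpow_tdiag mchar_fiber[OF assms])
  then show ?thesis
    by (simp add: conj_tdiag_involutive lam_h_pow_involutive teval_wpow_h)
qed

lemma teval_relator:
  assumes "r \<in> rels"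
  shows "teval deform r = mat 1"
proof -
  have commutator: "teval deform (wh @ [(g, False)] @ winv wh @ winv [(g, False)]) = mat 1" for g
  proof -
    define H C where "H = deform Gh" and "C = deform g"
    have "H ** C = C ** H"
      using diag_mod_t_deform[of g] lam_h_involutive
      by (simp add: H_def C_def deform_def tdiag_involutive_commute diag_mod_t_def)
    have "teval deform (wh @ [(g, False)] @ winv wh @ winv [(g, False)]) = H ** C ** adj2 H ** adj2 C"
      by (simp add: teval_append teval_winv wh_def H_def C_def matrix_mul_assoc)
    also have "\<dots> = C ** (H ** adj2 H) ** adj2 C"
      by (metis \<open>H ** C = C ** H\<close> matrix_mul_assoc)
    also have "\<dots> = mat 1"
      by (simp add: mult_adj2_det_1 det_deform H_def C_def)
    finally show ?thesis .
  qed
  have fiber: "teval deform (wrep c (nat p) @ winv (wpow wh q)) = mat 1" if "(c, p, q) \<in> fibers" for c p q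
    using mult_adj2_det_1(1)[OF det_tdiag] lam_nonzero[of Gh]
    by (simp add: teval_append teval_winv teval_fiber_relation[OF that] teval_wpow_h)
  show ?thesis
    using assms commutator[of Gc1] commutator[of Gc2] fiber[OF fiber_c1] fiber[OF fiber_c2] fiber[OF fiber_c3]
      p_ge_2
    by (auto simp: relators_def wc1_def wc2_def wpow_uminus wpow_nonneg)
qed

text \<open>The trace of \<open>teval deform\<close> is \<open>diag_trace lam + t\<^sup>2 deform_tangent\<close>; as \<open>t\<^sup>2\<close> squares to zero,
  \<open>deform_tangent\<close> is a tangent vector at \<open>diag_trace lam\<close>.\<close>

definition deform_tangent :: "word \<Rightarrow> complex" where
  "deform_tangent w = tp2 (trace (teval deform w))"

lemma trace_teval_deform:
  "tp0 (trace (teval deform w)) = diag_trace lam w" "tp1 (trace (teval deform w)) = 0"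
  using diag_mod_t_trace[OF diag_mod_t_teval[OF diag_mod_t_deform]] by (auto simp: diag_trace_def)

lemma deform_tangent_in_char_tangent: "deform_tangent \<in> char_tangent rels (diag_trace lam)"
proof -
  have "respects_pi1 rels deform_tangent"
    using teval_wequiv[OF det_deform teval_relator] by (simp add: respects_pi1_def deform_tangent_def)
  moreover have "deform_tangent (x @ y) + deform_tangent (x @ winv y) =
      diag_trace lam x * deform_tangent y + deform_tangent x * diag_trace lam y" for x y
  proof -
    have "trace (teval deform (x @ y)) + trace (teval deform (x @ winv y)) =
        trace (teval deform x) * trace (teval deform y)"
      by (simp add: teval_append teval_winv trace_mult_adj2)
    then have "tp2 (trace (teval deform (x @ y))) + tp2 (trace (teval deform (x @ winv y))) =
        tp2 (trace (teval deform x) * trace (teval deform y))"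
      by (metis tp_components(3))
    then show ?thesis
      by (simp add: deform_tangent_def tp2_mult trace_teval_deform)
  qed
  moreover have "deform_tangent (x @ y) = deform_tangent (y @ x)" for x y
    unfolding deform_tangent_def teval_append by (rule arg_cong[OF trace_mul_sym])
  moreover have "deform_tangent [] = 0"
    by (simp add: deform_tangent_def mat_1_tp)
  ultimately show ?thesis
    by (simp add: char_tangent_def)
qed

lemma deform_tangent_nonzero: "deform_tangent \<noteq> 0"
proof -
  have "trace (teval deform wc1) = trace (tdiag \<alpha> k1)"
    by (simp add: wc1_def deform_def trace_conj unip_inv_unip)
  then have "deform_tangent wc1 = k1 * (\<alpha> - inverse \<alpha>)"
    by (simp add: deform_tangent_def unip_inv_unip tdiag_def algebra_simps)
  moreover have "k1 \<noteq> 0"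
    using p_ge_2 q_nonzero by (simp add: k1_def)
  moreover have "\<alpha> - inverse \<alpha> \<noteq> 0"
    using eigenvalues_not_involutive(1) lam_nonzero[of Gc1] by (auto simp: field_simps)
  ultimately show ?thesis
    by (metis mult_eq_0_iff zero_fun_def)
qed

end

section \<open>Dimension of the tangent space\<close>

lemma vector_space_fscale: "vector_space fscale"
  by unfold_locales (auto simp: fscale_def fun_eq_iff algebra_simps)

lemma char_tangent_diff_fscale:
  assumes "D1 \<in> char_tangent R chi" "D2 \<in> char_tangent R chi"
  shows "D1 - fscale c D2 \<in> char_tangent R chi"
  using assms unfolding char_tangent_def respects_pi1_def fscale_def
  by (auto simp: algebra_simps) (metis (no_types, lifting) distrib_left)

lemma dim_eq_1_if_evaluation_injective:
  fixes V :: "(word \<Rightarrow> complex) set"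
  assumes closed: "\<And>D1 D2 c. D1 \<in> V \<Longrightarrow> D2 \<in> V \<Longrightarrow> D1 - fscale c D2 \<in> V"
    and injective: "\<And>D. D \<in> V \<Longrightarrow> D x = 0 \<Longrightarrow> D = 0"
    and d: "d \<in> V" "d \<noteq> 0"
  shows "vector_space.dim fscale V = 1"
proof -
  interpret vector_space fscale
    by (rule vector_space_fscale)
  have dx: "d x \<noteq> 0"
    using injective d by blast
  have "V \<subseteq> span {d}"
  proof
    fix D
    assume D: "D \<in> V"
    define c where "c = D x / d x"
    have "(D - fscale c d) x = 0"
      using dx by (simp add: c_def fscale_def)
    then have "D = fscale c d"
      using injective[OF closed[OF D d(1)]] by simp
    then show "D \<in> span {d}"
      unfolding span_singleton by blast
  qed
  moreover have "independent {d}"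
    using d(2) by (simp add: independent_insert span_empty)
  ultimately show ?thesis
    using d(1) by (intro dim_unique[of "{d}"]) auto
qed

context exceptional_diag
begin

lemma dim_char_tangent: "vector_space.dim fscale (char_tangent rels (diag_trace lam)) = 1"
  using char_tangent_diff_fscale char_tangent_eq_0 deform_tangent_in_char_tangent deform_tangent_nonzero
  by (intro dim_eq_1_if_evaluation_injective[where x = wc3])

end

section \<open>Diagonalising abelian representations\<close>

lemma matrix_inv_det_1:
  fixes X :: "complex^2^2"
  assumes "det X = 1"
  shows "matrix_inv X = adj2 X"
proof -
  let ?A = "matrix_inv X"
  have "X ** ?A = mat 1 \<and> ?A ** X = mat 1"
    unfolding matrix_inv_def by (rule someI_ex) (use mult_adj2_det_1[OF assms] in blast)
  then have "?A = ?A ** (X ** adj2 X)"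
    using mult_adj2_det_1[OF assms] by simp
  also have "\<dots> = adj2 X"
    using \<open>X ** ?A = mat 1 \<and> ?A ** X = mat 1\<close> by (simp add: matrix_mul_assoc)
  finally show ?thesis .
qed

lemma exists_eigenbasis:
  fixes C :: "complex^2^2"
  assumes "a \<noteq> a'" "a + a' = trace C" "a * a' = det C"
  obtains P where "det P \<noteq> 0" "C ** P = P ** mk2 a 0 0 a'"
proof -
  obtain al be ga de where C: "C = mk2 al be ga de"
    by (rule mk2_cases)
  have a': "a' = al + de - a"
    using assms(2) C by (simp add: eq_diff_eq add.commute)
  have ev: "(a - al) * (a - de) = be * ga" "(a' - al) * (a' - de) = be * ga"
    using assms(3) C unfolding a' by (simp_all add: algebra_simps)
  consider "be \<noteq> 0" | "be = 0" "ga \<noteq> 0" | "be = 0" "ga = 0" "a = al" | "be = 0" "ga = 0" "a = de"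
    using ev(1) by (cases "be = 0"; cases "ga = 0") auto
  then show thesis
  proof cases
    case 1
    show thesis
      by (rule that[of "mk2 be be (a - al) (a' - al)"])
        (use 1 assms(1) ev C in \<open>auto simp: algebra_simps\<close>)
  next
    case 2
    show thesis
      by (rule that[of "mk2 (a - de) (a' - de) ga ga"])
        (use 2 assms(1) ev C in \<open>auto simp: algebra_simps\<close>)
  next
    case 3
    show thesis
      by (rule that[of "mk2 1 0 0 1"]) (use 3 in \<open>simp_all add: C a'\<close>)
  next
    case 4
    show thesis
      by (rule that[of "mk2 0 1 1 0"]) (use 4 in \<open>simp_all add: C a'\<close>)
  qed
qed

lemma sl2_diagonalizable:
  fixes C :: "complex^2^2"
  assumes "det C = 1" "trace C \<noteq> 2" "trace C \<noteq> -2"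
  obtains P P' x y where "P' ** P = mat 1" "P ** P' = mat 1" "P' ** C ** P = mk2 x 0 0 y" "x \<noteq> y"
proof -
  define a where "a = (trace C + csqrt (trace C ^ 2 - 4)) / 2"
  define a' where "a' = trace C - a"
  have "a * a' = (trace C ^ 2 - csqrt (trace C ^ 2 - 4) ^ 2) / 4"
    by (simp add: a_def a'_def field_simps power2_eq_square)
  then have aa': "a * a' = det C"
    using assms(1) by (simp add: power2_csqrt)
  have "a \<noteq> a'"
  proof
    assume "a = a'"
    then have "a * a = 1"
      using aa' assms(1) by simp
    moreover have "trace C = 2 * a"
      using \<open>a = a'\<close> by (simp add: a'_def)
    ultimately show False
      using assms(2,3) by (auto simp: square_eq_1_iff)
  qed
  moreover have "a + a' = trace C"
    by (simp add: a'_def)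
  then obtain P where P: "det P \<noteq> 0" "C ** P = P ** mk2 a 0 0 a'"
    using exists_eigenbasis[OF \<open>a \<noteq> a'\<close> _ aa'] by blast
  moreover obtain P' where P': "P ** P' = mat 1" "P' ** P = mat 1"
    using P(1) invertible_det_nz unfolding invertible_def by blast
  moreover have "P' ** C ** P = mk2 a 0 0 a'"
    using P(2) P'(2) by (metis matrix_mul_assoc matrix_mul_lid)
  ultimately show thesis
    using that by blast
qed

lemma commutes_with_diag:
  fixes Y :: "complex^2^2"
  assumes "Y ** mk2 x 0 0 y = mk2 x 0 0 y ** Y" "x \<noteq> y"
  shows "Y = mk2 (Y$1$1) 0 0 (Y$2$2)"
proof -
  obtain e f g h where Y: "Y = mk2 e f g h"
    by (rule mk2_cases)
  have "f * (y - x) = 0" "g * (x - y) = 0"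
    using assms(1) Y by (simp_all add: algebra_simps)
  then show ?thesis
    using assms(2) Y by simp
qed

lemma left_inverse_diag:
  fixes Y :: "'a::field^2^2"
  assumes "mk2 l 0 0 (inverse l) ** Y = mat 1" "l \<noteq> 0"
  shows "Y = mk2 (inverse l) 0 0 l"
proof -
  have "Y = (mk2 (inverse l) 0 0 l ** mk2 l 0 0 (inverse l)) ** Y"
    using assms(2) by (simp add: mat_1_eq_mk2[symmetric])
  also have "\<dots> = mk2 (inverse l) 0 0 l"
    using assms(1) by (simp only: matrix_mul_assoc[symmetric]) simp
  finally show ?thesis .
qed

lemma conj_matrix_inv_diag:
  fixes X P P' :: "complex^2^2"
  assumes inv: "P' ** P = mat 1" "P ** P' = mat 1" and det: "det X = 1"
    and diag: "P' ** X ** P = mk2 l 0 0 (inverse l)" "l \<noteq> 0"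
  shows "P' ** matrix_inv X ** P = mk2 (inverse l) 0 0 l"
proof (rule left_inverse_diag)
  show "mk2 l 0 0 (inverse l) ** (P' ** matrix_inv X ** P) = mat 1"
    using conj_mult[OF inv(2), where X = X and Z = "adj2 X"] diag(1) mult_adj2_det_1(1)[OF det] inv(1)
    by (simp add: matrix_inv_det_1[OF det])
qed (rule diag(2))

lemma conj_commuting_diag:
  fixes X C P P' :: "complex^2^2"
  assumes inv: "P' ** P = mat 1" "P ** P' = mat 1"
    and diag: "P' ** C ** P = mk2 x 0 0 y" "x \<noteq> y"
    and commute: "X ** C = C ** X" and det: "det X = 1"
  shows "P' ** X ** P = mk2 ((P' ** X ** P)$1$1) 0 0 (inverse ((P' ** X ** P)$1$1))
    \<and> (P' ** X ** P)$1$1 \<noteq> 0"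
proof -
  let ?Y = "P' ** X ** P"
  have "?Y ** mk2 x 0 0 y = mk2 x 0 0 y ** ?Y"
    using conj_mult[OF inv(2), where X = X and Z = C] conj_mult[OF inv(2), where X = C and Z = X]
      diag(1) commute by simp
  then have Y: "?Y = mk2 (?Y$1$1) 0 0 (?Y$2$2)"
    using commutes_with_diag[OF _ diag(2)] by blast
  have "det ?Y = 1"
    using det_conj[OF inv(1)] det by simp
  then have "?Y$1$1 * ?Y$2$2 = 1"
    by (subst (asm) Y) simp
  then have "inverse (?Y$1$1) = ?Y$2$2" and "?Y$1$1 \<noteq> 0"
    by (auto intro: inverse_unique)
  with Y show ?thesis
    by simp
qed

lemma abelian_rep_diagonal:
  assumes rep: "is_rep R rho" and abelian: "abelian_image rho"
    and trace_c1: "trace (rho Gc1) \<noteq> 2" "trace (rho Gc1) \<noteq> -2"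
  obtains lam where "\<And>g. lam g \<noteq> 0" "\<And>w. trace (weval rho w) = diag_trace lam w"
    "\<And>w. weval rho w = mat 1 \<Longrightarrow> mchar lam w = 1"
proof -
  have det: "det (rho g) = 1" for g
    using rep by (simp add: is_rep_def SL2_def)
  obtain P P' x y where inv: "P' ** P = mat 1" "P ** P' = mat 1"
    and diag_c1: "P' ** rho Gc1 ** P = mk2 x 0 0 y" "x \<noteq> y"
    using sl2_diagonalizable[OF det trace_c1] .
  define lam where "lam g = (P' ** rho g ** P)$1$1" for g
  have "rho g ** rho Gc1 = rho Gc1 ** rho g" for g
    using abelian[unfolded abelian_image_def, rule_format, of "[(g, False)]" "[(Gc1, False)]"] by simp
  then have gen: "P' ** rho g ** P = mk2 (lam g) 0 0 (inverse (lam g))" "lam g \<noteq> 0" for g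
    using conj_commuting_diag[OF inv diag_c1] det unfolding lam_def by blast+
  have gen_inv: "P' ** matrix_inv (rho g) ** P = mk2 (inverse (lam g)) 0 0 (lam g)" for g
    using conj_matrix_inv_diag[OF inv det gen] .
  have weval_diag: "P' ** weval rho w ** P = mk2 (mchar lam w) 0 0 (inverse (mchar lam w))" for w
  proof (induction w)
    case Nil
    show ?case using inv by (simp add: mat_1_eq_mk2[symmetric])
  next
    case (Cons l w)
    then show ?case
      using conj_mult[OF inv(2), where Z = "weval rho w"] gen(1)[of "fst l"] gen_inv[of "fst l"]
      by (simp add: mult.commute)
  qed
  show thesis
  proof (rule that)
    show "lam g \<noteq> 0" for g
      by (rule gen(2))
    show "trace (weval rho w) = diag_trace lam w" for w
      using trace_conj[OF inv(2), of "weval rho w"] weval_diag by (simp add: diag_trace_def)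
    show "mchar lam w = 1" if "weval rho w = mat 1" for w
    proof -
      have "mk2 (mchar lam w) 0 0 (inverse (mchar lam w)) = mat 1"
        using weval_diag[of w] that inv(1) by simp
      then show ?thesis
        by (simp add: mat_1_eq_mk2)
    qed
  qed
qed

lemma plus_inverse_eq_pm2_iff:
  fixes l :: complex
  assumes "l \<noteq> 0"
  shows "l + inverse l = 2 \<or> l + inverse l = -2 \<longleftrightarrow> l * l = 1"
proof -
  have "l + inverse l = 2 \<longleftrightarrow> (l - 1) * (l - 1) = 0" "l + inverse l = -2 \<longleftrightarrow> (l + 1) * (l + 1) = 0"
    using assms by (simp_all add: field_simps algebra_simps eq_neg_iff_add_eq_0 eq_diff_eq)
  then show ?thesis
    by (auto simp: square_eq_1_iff eq_neg_iff_add_eq_0)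
qed

lemma exceptional_abelian_diagonal:
  assumes "exceptional_abelian R chi"
  obtains lam where "chi = diag_trace lam" "\<And>g. lam g \<noteq> 0" "\<And>r. r \<in> R \<Longrightarrow> mchar lam r = 1"
    "lam Gh * lam Gh = 1" "\<And>c. c \<in> {wc1, wc2, wc3} \<Longrightarrow> mchar lam c * mchar lam c \<noteq> 1"
proof -
  obtain rho where rep: "is_rep R rho" and "abelian_image rho" and chi: "chi = character rho"
    and h: "chi wh = 2 \<or> chi wh = -2" and c: "\<forall>c\<in>{wc1, wc2, wc3}. chi c \<noteq> 2 \<and> chi c \<noteq> -2"
    using assms unfolding exceptional_abelian_def by blast
  moreover have "trace (rho Gc1) \<noteq> 2" "trace (rho Gc1) \<noteq> -2"
    using c by (auto simp: chi character_def wc1_def)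
  ultimately obtain lam where nz: "\<And>g. lam g \<noteq> 0"
    and tr: "\<And>w. trace (weval rho w) = diag_trace lam w"
    and one: "\<And>w. weval rho w = mat 1 \<Longrightarrow> mchar lam w = 1"
    using abelian_rep_diagonal by blast
  have chi_lam: "chi = diag_trace lam"
    using tr by (auto simp: chi character_def)
  show thesis
  proof (rule that[OF chi_lam nz])
    show "mchar lam r = 1" if "r \<in> R" for r
      using one rep that by (simp add: is_rep_def)
    show "lam Gh * lam Gh = 1"
      using h plus_inverse_eq_pm2_iff[OF nz] by (simp add: chi_lam diag_trace_def wh_def)
    show "mchar lam c * mchar lam c \<noteq> 1" if "c \<in> {wc1, wc2, wc3}" for c
      using c that plus_inverse_eq_pm2_iff[of "mchar lam c"] mchar_nonzero[of lam c] nz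
      by (auto simp: chi_lam diag_trace_def)
  qed
qed

theorem proposition4p3:
  fixes p1 q1 p2 q2 p3 q3 :: int and chi :: "word \<Rightarrow> complex"
  assumes "p1 \<ge> 2" "p2 \<ge> 2" "p3 \<ge> 2"
    and "coprime p1 q1" "coprime p2 q2" "coprime p3 q3"
    and "- (of_int q1 / of_int p1) - of_int q2 / of_int p2 + of_int q3 / of_int p3 \<noteq> (0::real)"
    and "exceptional_abelian (relators p1 q1 p2 q2 p3 q3) chi"
  shows "vector_space.dim fscale (char_tangent (relators p1 q1 p2 q2 p3 q3) chi) = 1"
proof -
  obtain lam where chi: "chi = diag_trace lam" and diag: "\<And>g. lam g \<noteq> 0"
    "\<And>r. r \<in> relators p1 q1 p2 q2 p3 q3 \<Longrightarrow> mchar lam r = 1" "lam Gh * lam Gh = 1"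
    "\<And>c. c \<in> {wc1, wc2, wc3} \<Longrightarrow> mchar lam c * mchar lam c \<noteq> 1"
    using exceptional_abelian_diagonal[OF assms(8)] by blast
  text \<open>Coprimality is only used to get \<open>q\<^sub>i \<noteq> 0\<close>.\<close>
  have "q1 \<noteq> 0" "q2 \<noteq> 0" "q3 \<noteq> 0"
    using assms(1-6) by auto
  then interpret exceptional_diag p1 q1 p2 q2 p3 q3 lam
    using assms(1-3) diag by unfold_locales
  show ?thesis
    using dim_char_tangent by (simp add: chi)
qed

end
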